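(* Let $(F,<_F)$ and $(G,<_G)$ be ordered groups and let $\prec$ be the ordering of $F*G$ described in the context. Then $\prec$ restricts to $<_F$ on $F$ and to $<_G$ on $G$, and for any automorphisms $\phi\colon F\to F$ and $\psi\colon G\to G$ preserving $<_F$ and $<_G$ respectively, the automorphism $\phi*\psi\colon F*G\to F*G$ preserves $\prec$.
   Context: An ordered group is a group with a strict total order invariant under left and right multiplication. Construction of $\prec$ on $F*G$: order $F\times G$ lexicographically ($(f,g)<(f',g')$ iff $f<_Ff'$, or $f=f'$ and $g<_Gg'$). In $R=\mathbb{Z}(F\times G)$ call a nonzero element positive if the coefficient of its largest group element is a positive integer. Let $\rho\colon F*G\to M_2(R[t])$ be the homomorphism with $\rho(f)=\begin{pmatrix} f&(f-1)t\\0&1\end{pmatrix}$ for $f\in F$, $\rho(g)=\begin{pmatrix}1&0\\(g-1)t&g\end{pmatrix}$ for $g\in G$; it is injective. Order the matrix positions as $(1,1)$, $(2,2)$, then the two off-diagonal positions in a fixed order. A nonzero $M=\sum_i M_it^i\in M_2(R[t])$ ($M_i\in M_2(R)$) is positive if for the least $n$ with $M_n\ne0$, the first nonzero entry of $M_n$ is positive in $R$. Set $x\prec y$ iff $\rho(y)-\rho(x)$ is positive. *)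

theory Defs
  imports Main
begin

text \<open>A (possibly non-abelian) group is written additively via the class group_add;
  its order is the linorder of the type. Bi-invariance is the ordered-group axiom.\<close>

definition bi_invariant_order :: "'a::{group_add,linorder} itself \<Rightarrow> bool" where
  "bi_invariant_order T \<longleftrightarrow> (\<forall>a b c :: 'a. a < b \<longrightarrow> c + a < c + b \<and> a + c < b + c)"

definition order_automorphism :: "('a::{group_add,linorder} \<Rightarrow> 'a) \<Rightarrow> bool" where
  "order_automorphism \<phi> \<longleftrightarrow> bij \<phi> \<and> (\<forall>a b. \<phi> (a + b) = \<phi> a + \<phi> b) \<and>
     (\<forall>a b. a < b \<longrightarrow> \<phi> a < \<phi> b)"

definition reduced_word :: "('f::group_add + 'g::group_add) list \<Rightarrow> bool" where
  "reduced_word w \<longleftrightarrow> (\<forall>x\<in>set w. x \<noteq> Inl 0 \<and> x \<noteq> Inr 0) \<and>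
     (\<forall>i. Suc i < length w \<longrightarrow> isl (w ! i) \<noteq> isl (w ! Suc i))"

typedef (overloaded) ('f, 'g) freeprod = "{w :: ('f::group_add + 'g::group_add) list. reduced_word w}"
  by (rule exI[of _ "[]"]) (simp add: reduced_word_def)

definition inF :: "'f::group_add \<Rightarrow> ('f, 'g::group_add) freeprod" where
  "inF f = Abs_freeprod (if f = 0 then [] else [Inl f])"

definition inG :: "'g::group_add \<Rightarrow> ('f::group_add, 'g) freeprod" where
  "inG g = Abs_freeprod (if g = 0 then [] else [Inr g])"

definition freeprod_map :: "('f::group_add \<Rightarrow> 'f) \<Rightarrow> ('g::group_add \<Rightarrow> 'g) \<Rightarrow>
    ('f, 'g) freeprod \<Rightarrow> ('f, 'g) freeprod" where
  "freeprod_map \<phi> \<psi> x = Abs_freeprod (map (map_sum \<phi> \<psi>) (Rep_freeprod x))"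

text \<open>Elements of R: finitely supported functions F x G -> int (group F x G, componentwise).\<close>
type_synonym ('f, 'g) gring = "'f \<times> 'g \<Rightarrow> int"

definition gr_zero :: "('f, 'g) gring" where "gr_zero = (\<lambda>_. 0)"

definition gr_of :: "'f \<times> 'g \<Rightarrow> ('f, 'g) gring" where
  "gr_of h = (\<lambda>x. if x = h then 1 else 0)"

definition gr_one :: "('f::group_add, 'g::group_add) gring" where
  "gr_one = gr_of (0, 0)"

definition gr_add :: "('f, 'g) gring \<Rightarrow> ('f, 'g) gring \<Rightarrow> ('f, 'g) gring" where
  "gr_add a b = (\<lambda>x. a x + b x)"

definition gr_sub :: "('f, 'g) gring \<Rightarrow> ('f, 'g) gring \<Rightarrow> ('f, 'g) gring" where
  "gr_sub a b = (\<lambda>x. a x - b x)"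

definition gr_mult :: "('f::group_add, 'g::group_add) gring \<Rightarrow> ('f, 'g) gring \<Rightarrow> ('f, 'g) gring" where
  "gr_mult a b = (\<lambda>(f, g). \<Sum>k\<in>{k. a k \<noteq> 0}. a k * b (- fst k + f, - snd k + g))"

definition lex_less :: "'f::linorder \<times> 'g::linorder \<Rightarrow> 'f \<times> 'g \<Rightarrow> bool" where
  "lex_less x y \<longleftrightarrow> fst x < fst y \<or> (fst x = fst y \<and> snd x < snd y)"

definition gr_positive :: "('f::linorder, 'g::linorder) gring \<Rightarrow> bool" where
  "gr_positive a \<longleftrightarrow> (\<exists>h. a h > 0 \<and> (\<forall>h'. lex_less h h' \<longrightarrow> a h' = 0))"

text \<open>An element of M_2(R[t]) is given by its coefficient matrices M_n (n :: nat, coefficient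
  of t^n), each indexed by i, j in {0,1} (0 = first row/column, 1 = second).\<close>
type_synonym ('f, 'g) pmat = "nat \<Rightarrow> nat \<Rightarrow> nat \<Rightarrow> ('f, 'g) gring"

definition pm_one :: "('f::group_add, 'g::group_add) pmat" where
  "pm_one = (\<lambda>n i j. if n = 0 \<and> i = j then gr_one else gr_zero)"

definition pm_sub :: "('f, 'g) pmat \<Rightarrow> ('f, 'g) pmat \<Rightarrow> ('f, 'g) pmat" where
  "pm_sub A B = (\<lambda>n i j. gr_sub (A n i j) (B n i j))"

definition pm_mult :: "('f::group_add, 'g::group_add) pmat \<Rightarrow> ('f, 'g) pmat \<Rightarrow> ('f, 'g) pmat" where
  "pm_mult A B = (\<lambda>n i j h. \<Sum>a\<le>n. \<Sum>k<2. gr_mult (A a i k) (B (n - a) k j) h)"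

text \<open>rho(f) = [[f, (f-1)t],[0,1]], rho(g) = [[1,0],[(g-1)t, g]].\<close>
definition rho_F :: "'f::group_add \<Rightarrow> ('f, 'g::group_add) pmat" where
  "rho_F f = (\<lambda>n i j.
     if n = 0 then (if i = 0 \<and> j = 0 then gr_of (f, 0)
                    else if i = 1 \<and> j = 1 then gr_one else gr_zero)
     else if n = 1 \<and> i = 0 \<and> j = 1 then gr_sub (gr_of (f, 0)) gr_one
     else gr_zero)"

definition rho_G :: "'g::group_add \<Rightarrow> ('f::group_add, 'g) pmat" where
  "rho_G g = (\<lambda>n i j.
     if n = 0 then (if i = 0 \<and> j = 0 then gr_one
                    else if i = 1 \<and> j = 1 then gr_of (0, g) else gr_zero)
     else if n = 1 \<and> i = 1 \<and> j = 0 then gr_sub (gr_of (0, g)) gr_one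
     else gr_zero)"

definition rho_letter :: "'f::group_add + 'g::group_add \<Rightarrow> ('f, 'g) pmat" where
  "rho_letter x = (case x of Inl f \<Rightarrow> rho_F f | Inr g \<Rightarrow> rho_G g)"

definition rho :: "('f::group_add, 'g::group_add) freeprod \<Rightarrow> ('f, 'g) pmat" where
  "rho x = foldr (\<lambda>l M. pm_mult (rho_letter l) M) (Rep_freeprod x) pm_one"

definition entry_list :: "bool \<Rightarrow> ('f, 'g) pmat \<Rightarrow> nat \<Rightarrow> ('f, 'g) gring list" where
  "entry_list sw M n = [M n 0 0, M n 1 1] @
     (if sw then [M n 1 0, M n 0 1] else [M n 0 1, M n 1 0])"

definition pm_positive :: "bool \<Rightarrow> ('f::{group_add,linorder}, 'g::{group_add,linorder}) pmat \<Rightarrow> bool" where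
  "pm_positive sw M \<longleftrightarrow> (\<exists>n. (\<forall>m<n. \<forall>a\<in>set (entry_list sw M m). a = gr_zero) \<and>
      (case filter (\<lambda>a. a \<noteq> gr_zero) (entry_list sw M n) of
         [] \<Rightarrow> False
       | a # _ \<Rightarrow> gr_positive a))"

definition fp_less :: "bool \<Rightarrow> ('f::{group_add,linorder}, 'g::{group_add,linorder}) freeprod \<Rightarrow>
    ('f, 'g) freeprod \<Rightarrow> bool" where
  "fp_less sw x y \<longleftrightarrow> pm_positive sw (pm_sub (rho y) (rho x))"

end

theory Submission
  imports Defs
begin

text \<open>On a one-letter word the degree-0 diagonal of \<open>\<rho>\<close> is \<open>(f, 1)\<close> for \<open>f \<in> F\<close> and
  \<open>(1, g)\<close> for \<open>g \<in> G\<close>, so two letters of the same factor are compared through the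
  leading coefficient of \<open>f' - f\<close> resp. \<open>g' - g\<close> in \<open>\<int>(F \<times> G)\<close>, which is decided by
  \<open>f < f'\<close> resp. \<open>g < g'\<close>. For automorphisms \<open>\<phi>, \<psi>\<close>, the map \<open>\<phi> * \<psi>\<close> acts on \<open>\<rho>(F*G)\<close>
  entrywise through the ring automorphism of \<open>\<int>(F \<times> G)\<close> induced by \<open>\<phi> \<times> \<psi>\<close>; since
  \<open>\<phi> \<times> \<psi>\<close> is strictly monotone for the lexicographic order, it carries leading terms
  to leading terms and so preserves positivity.\<close>

lemma add_hom_zero:
  fixes \<phi> :: "'a::group_add \<Rightarrow> 'b::group_add"
  assumes "\<And>a b. \<phi> (a + b) = \<phi> a + \<phi> b"
  shows "\<phi> 0 = 0"
proof -
  have "\<phi> 0 + \<phi> 0 = \<phi> (0 + 0)"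
    by (rule assms[symmetric])
  also have "\<dots> = \<phi> 0 + 0"
    by simp
  finally show ?thesis
    by (simp only: add_left_cancel)
qed

lemma add_hom_neg_add:
  fixes \<phi> :: "'a::group_add \<Rightarrow> 'b::group_add"
  assumes add: "\<And>a b. \<phi> (a + b) = \<phi> a + \<phi> b"
  shows "\<phi> (- a + b) = - \<phi> a + \<phi> b"
proof -
  have "\<phi> a + \<phi> (- a) = \<phi> (a + - a)"
    by (rule add[symmetric])
  also have "\<dots> = 0"
    using add_hom_zero[OF add] by simp
  finally have "- \<phi> a = \<phi> (- a)"
    by (rule minus_unique)
  then show ?thesis
    by (simp add: add)
qed

lemma lex_less_asym: "lex_less x y \<Longrightarrow> \<not> lex_less y x"
  by (auto simp: lex_less_def)

lemma lex_less_linear: "x \<noteq> y \<Longrightarrow> lex_less x y \<or> lex_less y x"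
  by (cases x, cases y) (auto simp: lex_less_def)

lemma lex_less_map_prod:
  assumes "strict_mono \<phi>" and "strict_mono \<psi>" and "lex_less x y"
  shows "lex_less (map_prod \<phi> \<psi> x) (map_prod \<phi> \<psi> y)"
  using assms by (cases x, cases y) (auto simp: lex_less_def strict_monoD)

section \<open>Group ring automorphisms induced by bijections of \<open>F \<times> G\<close>\<close>

definition gr_map :: "('f \<times> 'g \<Rightarrow> 'f \<times> 'g) \<Rightarrow> ('f, 'g) gring \<Rightarrow> ('f, 'g) gring" where
  "gr_map \<sigma> a = a \<circ> inv \<sigma>"

definition pm_map :: "('f \<times> 'g \<Rightarrow> 'f \<times> 'g) \<Rightarrow> ('f, 'g) pmat \<Rightarrow> ('f, 'g) pmat" where
  "pm_map \<sigma> M = (\<lambda>n i j. gr_map \<sigma> (M n i j))"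

lemma gr_zero_apply: "gr_zero h = 0"
  by (simp add: gr_zero_def)

lemma gr_map_apply: "bij \<sigma> \<Longrightarrow> gr_map \<sigma> a (\<sigma> h) = a h"
  by (simp add: gr_map_def bij_is_inj)

lemma gr_map_zero: "gr_map \<sigma> gr_zero = gr_zero"
  by (simp add: gr_map_def gr_zero_def comp_def)

lemma gr_map_sub: "gr_map \<sigma> (gr_sub a b) = gr_sub (gr_map \<sigma> a) (gr_map \<sigma> b)"
  by (simp add: gr_map_def gr_sub_def comp_def)

lemma gr_map_of:
  assumes "bij \<sigma>"
  shows "gr_map \<sigma> (gr_of h) = gr_of (\<sigma> h)"
proof
  fix x
  have "inv \<sigma> x = h \<longleftrightarrow> x = \<sigma> h"
    using bij_inv_eq_iff[OF assms, of h x] by auto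
  then show "gr_map \<sigma> (gr_of h) x = gr_of (\<sigma> h) x"
    by (simp add: gr_map_def gr_of_def)
qed

lemma gr_map_eq_zero_iff:
  assumes "bij \<sigma>"
  shows "gr_map \<sigma> a = gr_zero \<longleftrightarrow> a = gr_zero"
proof
  assume "gr_map \<sigma> a = gr_zero"
  then show "a = gr_zero"
    using gr_map_apply[OF assms, of a] by (auto simp: gr_zero_def)
qed (simp add: gr_map_zero)

lemma gr_mult_apply:
  "gr_mult a b h = (\<Sum>k\<in>{k. a k \<noteq> 0}. a k * b (- fst k + fst h, - snd k + snd h))"
  by (cases h) (simp add: gr_mult_def)

lemma gr_map_mult:
  assumes bij: "bij \<sigma>"
    and ldiv: "\<And>k h. \<sigma> (- fst k + fst h, - snd k + snd h)
                    = (- fst (\<sigma> k) + fst (\<sigma> h), - snd (\<sigma> k) + snd (\<sigma> h))"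
  shows "gr_map \<sigma> (gr_mult a b) = gr_mult (gr_map \<sigma> a) (gr_map \<sigma> b)"
proof
  fix h
  obtain h0 where h: "h = \<sigma> h0"
    using bij_pointE[OF bij] by metis
  have "gr_mult (gr_map \<sigma> a) (gr_map \<sigma> b) (\<sigma> h0)
      = (\<Sum>k\<in>\<sigma> ` {k. a k \<noteq> 0}.
           gr_map \<sigma> a k * gr_map \<sigma> b (- fst k + fst (\<sigma> h0), - snd k + snd (\<sigma> h0)))"
    by (simp add: gr_mult_apply gr_map_def bij_image_Collect_eq[OF bij])
  also have "\<dots> = (\<Sum>k\<in>{k. a k \<noteq> 0}. a k * b (- fst k + fst h0, - snd k + snd h0))"
    by (simp add: sum.reindex inj_on_subset[OF bij_is_inj[OF bij]] gr_map_apply[OF bij]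
        ldiv[symmetric])
  finally show "gr_map \<sigma> (gr_mult a b) h = gr_mult (gr_map \<sigma> a) (gr_map \<sigma> b) h"
    by (simp add: h gr_map_apply[OF bij] gr_mult_apply)
qed

lemma gr_positive_gr_map:
  assumes bij: "bij \<sigma>"
    and mono: "\<And>x y. lex_less x y \<Longrightarrow> lex_less (\<sigma> x) (\<sigma> y)"
    and "gr_positive a"
  shows "gr_positive (gr_map \<sigma> a)"
proof -
  obtain h where h: "a h > 0" and top: "\<And>h'. lex_less h h' \<Longrightarrow> a h' = 0"
    using \<open>gr_positive a\<close> unfolding gr_positive_def by blast
  have "gr_map \<sigma> a h' = 0" if "lex_less (\<sigma> h) h'" for h'
  proof -
    obtain h'' where h': "h' = \<sigma> h''"
      using bij_pointE[OF bij] by metis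
    have "lex_less h h''"
      using that lex_less_linear[of h h''] mono[of h'' h] lex_less_asym unfolding h' by blast
    then show ?thesis
      by (simp add: h' gr_map_apply[OF bij] top)
  qed
  then show ?thesis
    using h gr_map_apply[OF bij, of a h] unfolding gr_positive_def
    by (intro exI[of _ "\<sigma> h"]) auto
qed

lemma pm_map_sub: "pm_map \<sigma> (pm_sub A B) = pm_sub (pm_map \<sigma> A) (pm_map \<sigma> B)"
  by (simp add: pm_map_def pm_sub_def gr_map_sub)

lemma pm_map_one:
  assumes "bij \<sigma>" and "\<sigma> (0, 0) = (0, 0)"
  shows "pm_map \<sigma> pm_one = pm_one"
  using assms by (intro ext) (simp add: pm_map_def pm_one_def gr_one_def gr_map_of gr_map_zero)

lemma pm_map_mult:
  assumes "bij \<sigma>"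
    and "\<And>k h. \<sigma> (- fst k + fst h, - snd k + snd h)
              = (- fst (\<sigma> k) + fst (\<sigma> h), - snd (\<sigma> k) + snd (\<sigma> h))"
  shows "pm_map \<sigma> (pm_mult A B) = pm_mult (pm_map \<sigma> A) (pm_map \<sigma> B)"
  by (intro ext) (simp add: pm_mult_def pm_map_def gr_map_mult[OF assms, symmetric],
      simp add: gr_map_def)

lemma pm_positive_pm_map:
  assumes bij: "bij \<sigma>"
    and mono: "\<And>x y. lex_less x y \<Longrightarrow> lex_less (\<sigma> x) (\<sigma> y)"
    and "pm_positive sw M"
  shows "pm_positive sw (pm_map \<sigma> M)"
proof -
  have entries: "entry_list sw (pm_map \<sigma> M) n = map (gr_map \<sigma>) (entry_list sw M n)" for n
    by (simp add: entry_list_def pm_map_def)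
  have nonzero: "filter (\<lambda>a. a \<noteq> gr_zero) (map (gr_map \<sigma>) l)
      = map (gr_map \<sigma>) (filter (\<lambda>a. a \<noteq> gr_zero) l)" for l
    by (simp add: filter_map comp_def gr_map_eq_zero_iff[OF bij])
  obtain n where below: "\<forall>m<n. \<forall>a\<in>set (entry_list sw M m). a = gr_zero"
    and first: "case filter (\<lambda>a. a \<noteq> gr_zero) (entry_list sw M n) of
                  [] \<Rightarrow> False | a # _ \<Rightarrow> gr_positive a"
    using \<open>pm_positive sw M\<close> unfolding pm_positive_def by blast
  have map_below: "\<forall>m<n. \<forall>a\<in>set (entry_list sw (pm_map \<sigma> M) m). a = gr_zero"
  proof (intro allI impI ballI)
    fix m a
    assume "m < n" and "a \<in> set (entry_list sw (pm_map \<sigma> M) m)"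
    then obtain b where "b \<in> set (entry_list sw M m)" and a: "a = gr_map \<sigma> b"
      by (auto simp: entries)
    then have "b = gr_zero"
      using below \<open>m < n\<close> by blast
    then show "a = gr_zero"
      by (simp add: a gr_map_zero)
  qed
  have map_first: "case filter (\<lambda>a. a \<noteq> gr_zero) (entry_list sw (pm_map \<sigma> M) n) of
                     [] \<Rightarrow> False | a # _ \<Rightarrow> gr_positive a"
  proof -
    obtain a r where "filter (\<lambda>a. a \<noteq> gr_zero) (entry_list sw M n) = a # r"
      and "gr_positive a"
      using first by (auto split: list.splits)
    then show ?thesis
      by (simp add: entries nonzero gr_positive_gr_map[OF bij mono])
  qed
  show ?thesis
    unfolding pm_positive_def using map_below map_first by blast
qed

section \<open>The representation intertwines \<open>\<phi> * \<psi>\<close> with \<open>\<phi> \<times> \<psi>\<close>\<close>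

lemma Rep_freeprod_map:
  assumes "\<And>a. \<phi> a = 0 \<longleftrightarrow> a = 0" and "\<And>b. \<psi> b = 0 \<longleftrightarrow> b = 0"
  shows "Rep_freeprod (freeprod_map \<phi> \<psi> x) = map (map_sum \<phi> \<psi>) (Rep_freeprod x)"
proof -
  have "map_sum \<phi> \<psi> z = Inl 0 \<longleftrightarrow> z = Inl 0" for z
    using assms by (cases z) simp_all
  moreover have "map_sum \<phi> \<psi> z = Inr 0 \<longleftrightarrow> z = Inr 0" for z
    using assms by (cases z) simp_all
  moreover have "reduced_word (Rep_freeprod x)"
    using Rep_freeprod by blast
  ultimately have "reduced_word (map (map_sum \<phi> \<psi>) (Rep_freeprod x))"
    unfolding reduced_word_def by (simp add: isl_map_sum)
  then show ?thesis
    unfolding freeprod_map_def by (simp add: Abs_freeprod_inverse)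
qed

context
  fixes \<phi> :: "'f::group_add \<Rightarrow> 'f" and \<psi> :: "'g::group_add \<Rightarrow> 'g"
  assumes bij_\<phi>: "bij \<phi>" and add_\<phi>: "\<And>a b. \<phi> (a + b) = \<phi> a + \<phi> b"
    and bij_\<psi>: "bij \<psi>" and add_\<psi>: "\<And>a b. \<psi> (a + b) = \<psi> a + \<psi> b"
begin

lemma bij_map_prod: "bij (map_prod \<phi> \<psi>)"
  using bij_betw_map_prod[OF bij_\<phi> bij_\<psi>] by simp

lemma pm_map_rho_letter:
  "pm_map (map_prod \<phi> \<psi>) (rho_letter l) = rho_letter (map_sum \<phi> \<psi> l)"
  using add_hom_zero[OF add_\<phi>] add_hom_zero[OF add_\<psi>]
  by (cases l) (auto intro!: ext simp: rho_letter_def rho_F_def rho_G_def pm_map_def gr_one_def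
      gr_map_of[OF bij_map_prod] gr_map_sub gr_map_zero)

lemma rho_freeprod_map: "rho (freeprod_map \<phi> \<psi> x) = pm_map (map_prod \<phi> \<psi>) (rho x)"
proof -
  have ldiv: "map_prod \<phi> \<psi> (- fst k + fst h, - snd k + snd h)
      = (- fst (map_prod \<phi> \<psi> k) + fst (map_prod \<phi> \<psi> h),
         - snd (map_prod \<phi> \<psi> k) + snd (map_prod \<phi> \<psi> h))" for k h
    by (simp add: add_hom_neg_add[OF add_\<phi>] add_hom_neg_add[OF add_\<psi>])
  have "\<phi> a = 0 \<longleftrightarrow> a = 0" "\<psi> b = 0 \<longleftrightarrow> b = 0" for a b
    using add_hom_zero[OF add_\<phi>] add_hom_zero[OF add_\<psi>]
      bij_is_inj[OF bij_\<phi>] bij_is_inj[OF bij_\<psi>] by (metis injD)+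
  note Rep = Rep_freeprod_map[OF this]
  have "pm_map (map_prod \<phi> \<psi>) (foldr (\<lambda>l M. pm_mult (rho_letter l) M) w pm_one)
      = foldr (\<lambda>l M. pm_mult (rho_letter l) M) (map (map_sum \<phi> \<psi>) w) pm_one" for w
  proof (induction w)
    case Nil
    show ?case
      using add_hom_zero[OF add_\<phi>] add_hom_zero[OF add_\<psi>] by (simp add: pm_map_one[OF bij_map_prod])
  next
    case (Cons l w)
    then show ?case
      by (simp only: foldr_Cons list.map comp_apply pm_map_mult[OF bij_map_prod ldiv]
          pm_map_rho_letter)
  qed
  then show ?thesis
    unfolding rho_def Rep by simp
qed

end

lemma fp_less_freeprod_map:
  assumes "order_automorphism \<phi>" and "order_automorphism \<psi>" and "fp_less sw x y"
  shows "fp_less sw (freeprod_map \<phi> \<psi> x) (freeprod_map \<phi> \<psi> y)"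
proof -
  have \<phi>: "bij \<phi>" "\<And>a b. \<phi> (a + b) = \<phi> a + \<phi> b" "strict_mono \<phi>"
    and \<psi>: "bij \<psi>" "\<And>a b. \<psi> (a + b) = \<psi> a + \<psi> b" "strict_mono \<psi>"
    using assms(1,2) unfolding order_automorphism_def strict_mono_def by (blast+)
  show ?thesis
    using pm_positive_pm_map[OF bij_map_prod[OF \<phi>(1,2) \<psi>(1,2)]
        lex_less_map_prod[OF \<phi>(3) \<psi>(3)] assms(3)[unfolded fp_less_def]]
    unfolding fp_less_def rho_freeprod_map[OF \<phi>(1,2) \<psi>(1,2)] pm_map_sub .
qed

section \<open>The order restricted to the factors\<close>

lemma finite_support_gr_of: "finite {k. gr_of h k \<noteq> 0}"
  by (rule finite_subset[of _ "{h}"]) (auto simp: gr_of_def)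

lemma gr_mult_zero_right: "gr_mult a gr_zero = gr_zero"
  by (simp add: gr_mult_def gr_zero_def fun_eq_iff)

lemma gr_mult_one_right:
  fixes a :: "('f::group_add, 'g::group_add) gring"
  assumes "finite {k. a k \<noteq> 0}"
  shows "gr_mult a gr_one = a"
proof
  fix h :: "'f \<times> 'g"
  have "a k * gr_one (- fst k + fst h, - snd k + snd h) = (if k = h then a k else 0)" for k
    by (cases k, cases h) (auto simp: gr_one_def gr_of_def add_eq_0_iff)
  then have "gr_mult a gr_one h = (\<Sum>k\<in>{k. a k \<noteq> 0}. if k = h then a k else 0)"
    by (simp add: gr_mult_apply)
  also have "\<dots> = a h"
    using assms by (simp add: sum.delta)
  finally show "gr_mult a gr_one h = a h" .
qed

lemma pm_mult_one_right_degree0: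
  assumes "j < 2" and "finite {k. M 0 i j k \<noteq> 0}"
  shows "pm_mult M pm_one 0 i j = M 0 i j"
proof -
  have "pm_mult M pm_one 0 i j = (\<lambda>h. \<Sum>k<2. gr_mult (M 0 i k) (if k = j then gr_one else gr_zero) h)"
    by (simp add: pm_mult_def pm_one_def)
  also have "\<dots> = gr_mult (M 0 i j) gr_one"
    using assms(1) by (auto simp: numeral_2_eq_2 less_Suc_eq gr_mult_zero_right gr_zero_apply)
  finally show ?thesis
    using gr_mult_one_right[OF assms(2)] by simp
qed

lemma rho_single_letter_diag:
  assumes "reduced_word [l]" and "i < 2"
  shows "rho (Abs_freeprod [l]) 0 i i = rho_letter l 0 i i"
proof -
  have "finite {k. rho_letter l 0 i i k \<noteq> 0}"
    using assms(2) finite_support_gr_of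
    by (cases l) (auto simp: rho_letter_def rho_F_def rho_G_def gr_one_def gr_zero_def
        numeral_2_eq_2 less_Suc_eq)
  then show ?thesis
    using assms by (simp add: rho_def Abs_freeprod_inverse pm_mult_one_right_degree0)
qed

lemma rho_Nil: "rho (Abs_freeprod []) = pm_one"
  by (simp add: rho_def Abs_freeprod_inverse reduced_word_def)

lemma rho_inF_diag:
  "rho (inF f :: ('f::group_add, 'g::group_add) freeprod) 0 0 0 = gr_of (f, 0)"
  "rho (inF f :: ('f, 'g) freeprod) 0 1 1 = gr_of (0, 0)"
proof -
  have "reduced_word [Inl f :: 'f + 'g]" if "f \<noteq> 0"
    using that by (simp add: reduced_word_def)
  then show "rho (inF f :: ('f, 'g) freeprod) 0 0 0 = gr_of (f, 0)"
    and "rho (inF f :: ('f, 'g) freeprod) 0 1 1 = gr_of (0, 0)"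
    by (auto simp: inF_def rho_Nil pm_one_def gr_one_def rho_single_letter_diag rho_letter_def rho_F_def)
qed

lemma rho_inG_diag:
  "rho (inG g :: ('f::group_add, 'g::group_add) freeprod) 0 0 0 = gr_of (0, 0)"
  "rho (inG g :: ('f, 'g) freeprod) 0 1 1 = gr_of (0, g)"
proof -
  have "reduced_word [Inr g :: 'f + 'g]" if "g \<noteq> 0"
    using that by (simp add: reduced_word_def)
  then show "rho (inG g :: ('f, 'g) freeprod) 0 0 0 = gr_of (0, 0)"
    and "rho (inG g :: ('f, 'g) freeprod) 0 1 1 = gr_of (0, g)"
    by (auto simp: inG_def rho_Nil pm_one_def gr_one_def rho_single_letter_diag rho_letter_def rho_G_def)
qed

lemma gr_sub_of_eq_zero_iff: "gr_sub (gr_of p) (gr_of p') = gr_zero \<longleftrightarrow> p = p'"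
proof
  assume "gr_sub (gr_of p) (gr_of p') = gr_zero"
  then have "gr_sub (gr_of p) (gr_of p') p = 0"
    by (simp add: gr_zero_apply)
  then show "p = p'"
    by (simp add: gr_sub_def gr_of_def split: if_splits)
qed (simp add: gr_sub_def gr_zero_def)

lemma gr_positive_sub_of:
  assumes "p \<noteq> p'"
  shows "gr_positive (gr_sub (gr_of p) (gr_of p')) \<longleftrightarrow> lex_less p' p"
proof
  assume "gr_positive (gr_sub (gr_of p) (gr_of p'))"
  then obtain h where h: "gr_sub (gr_of p) (gr_of p') h > 0"
    and top: "\<And>h'. lex_less h h' \<Longrightarrow> gr_sub (gr_of p) (gr_of p') h' = 0"
    unfolding gr_positive_def by blast
  have "h = p"
    using h by (auto simp: gr_sub_def gr_of_def split: if_splits)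
  then show "lex_less p' p"
    using top[of p'] assms lex_less_linear[OF assms] by (auto simp: gr_sub_def gr_of_def)
next
  assume "lex_less p' p"
  then show "gr_positive (gr_sub (gr_of p) (gr_of p'))"
    unfolding gr_positive_def using assms lex_less_asym
    by (intro exI[of _ p]) (auto simp: gr_sub_def gr_of_def lex_less_def)
qed

lemma pm_positive_iff_first_entry:
  assumes "filter (\<lambda>a. a \<noteq> gr_zero) (entry_list sw M 0) = a # r"
  shows "pm_positive sw M \<longleftrightarrow> gr_positive a"
proof
  assume "pm_positive sw M"
  then obtain n where below: "\<forall>m<n. \<forall>a\<in>set (entry_list sw M m). a = gr_zero"
    and first: "case filter (\<lambda>a. a \<noteq> gr_zero) (entry_list sw M n) of
                  [] \<Rightarrow> False | a # _ \<Rightarrow> gr_positive a"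
    unfolding pm_positive_def by blast
  have "n = 0"
  proof (rule ccontr)
    assume "n \<noteq> 0"
    then have "filter (\<lambda>a. a \<noteq> gr_zero) (entry_list sw M 0) = []"
      using below by (simp add: filter_empty_conv)
    with assms show False
      by simp
  qed
  then show "gr_positive a"
    using first assms by simp
qed (use assms in \<open>auto simp: pm_positive_def intro: exI[of _ 0]\<close>)

lemma pm_positive_sub_diag_degree0:
  assumes "A 0 0 0 = gr_of p" and "A 0 1 1 = gr_of q"
    and "B 0 0 0 = gr_of p'" and "B 0 1 1 = gr_of q'"
    and "p \<noteq> p' \<or> q \<noteq> q'"
  shows "pm_positive sw (pm_sub A B) \<longleftrightarrow> (if p = p' then lex_less q' q else lex_less p' p)"
proof -
  obtain rest where entries: "entry_list sw (pm_sub A B) 0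
      = gr_sub (gr_of p) (gr_of p') # gr_sub (gr_of q) (gr_of q') # rest"
    unfolding entry_list_def pm_sub_def assms(1-4) by simp
  show ?thesis
  proof (cases "p = p'")
    case True
    then have "filter (\<lambda>a. a \<noteq> gr_zero) (entry_list sw (pm_sub A B) 0)
        = gr_sub (gr_of q) (gr_of q') # filter (\<lambda>a. a \<noteq> gr_zero) rest"
      using assms(5) by (simp add: entries gr_sub_of_eq_zero_iff)
    then show ?thesis
      using True assms(5) by (simp add: pm_positive_iff_first_entry gr_positive_sub_of)
  next
    case False
    then have "filter (\<lambda>a. a \<noteq> gr_zero) (entry_list sw (pm_sub A B) 0)
        = gr_sub (gr_of p) (gr_of p') # filter (\<lambda>a. a \<noteq> gr_zero) (gr_sub (gr_of q) (gr_of q') # rest)"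
      by (simp add: entries gr_sub_of_eq_zero_iff)
    then show ?thesis
      using False by (simp add: pm_positive_iff_first_entry gr_positive_sub_of)
  qed
qed

lemma not_pm_positive_sub_self: "\<not> pm_positive sw (pm_sub A A)"
  by (simp add: pm_positive_def entry_list_def pm_sub_def gr_sub_def gr_zero_def)

lemma fp_less_inF:
  fixes f f' :: "'f::{group_add,linorder}"
  shows "fp_less sw (inF f :: ('f, 'g::{group_add,linorder}) freeprod) (inF f') \<longleftrightarrow> f < f'"
proof (cases "f = f'")
  case False
  then show ?thesis
    by (simp add: fp_less_def lex_less_def
        pm_positive_sub_diag_degree0[where A = "rho (inF f')" and B = "rho (inF f)",
          OF rho_inF_diag rho_inF_diag])
qed (simp add: fp_less_def not_pm_positive_sub_self)

lemma fp_less_inG: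
  fixes g g' :: "'g::{group_add,linorder}"
  shows "fp_less sw (inG g :: ('f::{group_add,linorder}, 'g) freeprod) (inG g') \<longleftrightarrow> g < g'"
proof (cases "g = g'")
  case False
  then show ?thesis
    by (simp add: fp_less_def lex_less_def
        pm_positive_sub_diag_degree0[where A = "rho (inG g')" and B = "rho (inG g)",
          OF rho_inG_diag rho_inG_diag])
qed (simp add: fp_less_def not_pm_positive_sub_self)

theorem corollary4p1:
  fixes \<phi> :: "'f::{group_add,linorder} \<Rightarrow> 'f"
    and \<psi> :: "'g::{group_add,linorder} \<Rightarrow> 'g"
    and sw :: bool
  assumes "bi_invariant_order TYPE('f)"
    and "bi_invariant_order TYPE('g)"
  shows "(\<forall>f f' :: 'f. fp_less sw (inF f :: ('f, 'g) freeprod) (inF f') \<longleftrightarrow> f < f')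
       \<and> (\<forall>g g' :: 'g. fp_less sw (inG g :: ('f, 'g) freeprod) (inG g') \<longleftrightarrow> g < g')
       \<and> (order_automorphism \<phi> \<longrightarrow> order_automorphism \<psi> \<longrightarrow>
            (\<forall>x y :: ('f, 'g) freeprod. fp_less sw x y \<longrightarrow>
               fp_less sw (freeprod_map \<phi> \<psi> x) (freeprod_map \<phi> \<psi> y)))"
proof (intro conjI allI impI)
  show "fp_less sw (inF f :: ('f, 'g) freeprod) (inF f') \<longleftrightarrow> f < f'" for f f'
    by (rule fp_less_inF)
  show "fp_less sw (inG g :: ('f, 'g) freeprod) (inG g') \<longleftrightarrow> g < g'" for g g'
    by (rule fp_less_inG)
  show "fp_less sw (freeprod_map \<phi> \<psi> x) (freeprod_map \<phi> \<psi> y)"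
    if "order_automorphism \<phi>" "order_automorphism \<psi>" "fp_less sw x y" for x y :: "('f, 'g) freeprod"
    using that by (rule fp_less_freeprod_map)
qed

end
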